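(* Let $\varphi:Q\to Q_C$ be the homomorphism determined by $\varphi(y_i)=A_i$ for $i=1,\dots,m$. Then for every $w\in Q$, $|\varphi(w)|_{Y_C}=C\,|w|_Y$, where $|\cdot|_{Y_C}$ is the word length in $Q_C$ with respect to $Y_C$ and $|\cdot|_Y$ is the word length in $Q$ with respect to $Y$.
   Context: Let $Q$ be a finitely generated recursively presented group with presentation $\langle Y\mid\mathcal{S}\rangle$, where $Y=\{y_1,\dots,y_m\}$ is finite, $\mathcal{S}$ is a recursive set of positive words over $Y$, and the empty word is not in $\mathcal{S}$. Let $C\ge1$ be an integer. For $i=1,\dots,m$ let $Y_{C,i}=\{a_{1,i},\dots,a_{C,i}\}$, $Y_C=\bigcup_iY_{C,i}$ (all letters distinct), $A_i=a_{1,i}\cdots a_{C,i}\in F(Y_C)$. For $r=r(y_1,\dots,y_m)\in\mathcal{S}$ let $r_C=r(A_1,\dots,A_m)$, $\mathcal{S}_C=\{r_C:r\in\mathcal{S}\}$, and $Q_C=\langle Y_C\mid\mathcal{S}_C\rangle$. (The map $\varphi$ is well defined since it sends each relator $r$ to $r_C$.) *)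

theory Defs
  imports Main
begin

text \<open>Words over a generating alphabet: a letter is (True, x) for x and (False, x) for x inverse.\<close>
type_synonym 'g word = "(bool \<times> 'g) list"

definition inv_word :: "'g word \<Rightarrow> 'g word" where
  "inv_word w = rev (map (\<lambda>(b, x). (\<not> b, x)) w)"

definition pos_word :: "'g list \<Rightarrow> 'g word" where
  "pos_word r = map (\<lambda>x. (True, x)) r"

text \<open>Equality in the group presented by generators and the (positive) relators R:
  the congruence on words generated by free cancellation and relators.\<close>
inductive pres_eq :: "'g list set \<Rightarrow> 'g word \<Rightarrow> 'g word \<Rightarrow> bool" for R where
  refl: "pres_eq R w w"
| sym: "pres_eq R u v \<Longrightarrow> pres_eq R v u"
| trans: "pres_eq R u v \<Longrightarrow> pres_eq R v w \<Longrightarrow> pres_eq R u w"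
| cancel: "pres_eq R (u @ [(b, x), (\<not> b, x)] @ v) (u @ v)"
| rel: "r \<in> R \<Longrightarrow> pres_eq R (u @ pos_word r @ v) (u @ v)"

definition word_length :: "'g set \<Rightarrow> 'g list set \<Rightarrow> 'g word \<Rightarrow> nat" where
  "word_length Y R w = (LEAST n. \<exists>w'. set (map snd w') \<subseteq> Y \<and> length w' = n \<and> pres_eq R w w')"

text \<open>Generators y_i of Q are i < m; generators a_{j,i} of Q_C are (j,i) with j < C, i < m.\<close>
definition Y_C :: "nat \<Rightarrow> nat \<Rightarrow> (nat \<times> nat) set" where
  "Y_C C m = {..<C} \<times> {..<m}"

definition A_C :: "nat \<Rightarrow> nat \<Rightarrow> (nat \<times> nat) list" where
  "A_C C i = map (\<lambda>j. (j, i)) [0..<C]"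

definition rel_C :: "nat \<Rightarrow> nat list \<Rightarrow> (nat \<times> nat) list" where
  "rel_C C r = concat (map (A_C C) r)"

definition S_C :: "nat \<Rightarrow> nat list set \<Rightarrow> (nat \<times> nat) list set" where
  "S_C C S = rel_C C ` S"

definition phi_C :: "nat \<Rightarrow> nat word \<Rightarrow> (nat \<times> nat) word" where
  "phi_C C w = concat (map (\<lambda>(b, i). if b then pos_word (A_C C i)
                                         else inv_word (pos_word (A_C C i))) w)"

end

theory Submission
  imports Defs
begin

text \<open>Both \<open>\<phi>\<close> and, for each layer \<open>j < C\<close>, the projection \<open>\<psi>\<^sub>j\<close> killing all generators
  \<open>a\<^sub>k\<^sub>,\<^sub>i\<close> with \<open>k \<noteq> j\<close> and sending \<open>a\<^sub>j\<^sub>,\<^sub>i\<close> to \<open>y\<^sub>i\<close> are substitution homomorphisms that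
  map relators to relators, hence well defined on the presented groups. Since every \<open>A\<^sub>i\<close>
  contains exactly one letter of each layer, \<open>\<psi>\<^sub>j \<circ> \<phi>\<close> is the identity. A geodesic word for
  \<open>w\<close> is mapped by \<open>\<phi>\<close> to a word of length \<open>C |w|\<close>, so \<open>|\<phi>(w)| \<le> C |w|\<close>. Conversely the
  letters of a geodesic word \<open>v\<close> for \<open>\<phi>(w)\<close> are distributed among the \<open>C\<close> words \<open>\<psi>\<^sub>j(v)\<close>,
  each of which represents \<open>w\<close> and so has length at least \<open>|w|\<close>.\<close>

lemma inv_word_Nil [simp]: "inv_word [] = []"
  by (simp add: inv_word_def)

lemma inv_word_Cons [simp]: "inv_word ((b, x) # v) = inv_word v @ [(\<not> b, x)]"
  by (simp add: inv_word_def)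

lemma inv_word_append [simp]: "inv_word (u @ v) = inv_word v @ inv_word u"
  by (simp add: inv_word_def)

lemma inv_word_inv_word [simp]: "inv_word (inv_word v) = v"
  by (induction v) (auto simp: inv_word_def)

lemma snd_set_inv_word [simp]: "snd ` set (inv_word v) = snd ` set v"
  by (simp add: inv_word_def image_image case_prod_unfold)

definition subst_word :: "('a \<Rightarrow> 'b word) \<Rightarrow> 'a word \<Rightarrow> 'b word" where
  "subst_word \<sigma> w = concat (map (\<lambda>(b, x). if b then \<sigma> x else inv_word (\<sigma> x)) w)"

lemma subst_word_Nil [simp]: "subst_word \<sigma> [] = []"
  by (simp add: subst_word_def)

lemma subst_word_Cons [simp]:
  "subst_word \<sigma> ((b, x) # w) = (if b then \<sigma> x else inv_word (\<sigma> x)) @ subst_word \<sigma> w"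
  by (simp add: subst_word_def)

lemma subst_word_append [simp]: "subst_word \<sigma> (u @ v) = subst_word \<sigma> u @ subst_word \<sigma> v"
  by (simp add: subst_word_def)

lemma subst_word_inv_word: "subst_word \<sigma> (inv_word w) = inv_word (subst_word \<sigma> w)"
  by (induction w) auto

lemma subst_word_pos_word: "subst_word \<sigma> (pos_word r) = concat (map \<sigma> r)"
  by (induction r) (auto simp: pos_word_def)

lemma subst_word_subst_word:
  "subst_word \<sigma> (subst_word \<tau> w) = subst_word (subst_word \<sigma> \<circ> \<tau>) w"
  by (induction w) (auto simp: subst_word_inv_word)

lemma subst_word_letter: "subst_word (\<lambda>x. [(True, x)]) w = w"
  by (induction w) (auto simp: inv_word_def)

lemma snd_set_subst_word:
  "snd ` set (subst_word \<sigma> w) = (\<Union>x\<in>snd ` set w. snd ` set (\<sigma> x))"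
  by (induction w) (simp_all add: subst_word_def split_def image_Un)

lemma pres_eq_append_cong:
  assumes "pres_eq R a b"
  shows "pres_eq R (u @ a @ v) (u @ b @ v)"
  using assms
proof (induction rule: pres_eq.induct)
  case (refl w)
  then show ?case by (rule pres_eq.refl)
next
  case (sym a b)
  from sym.IH show ?case by (rule pres_eq.sym)
next
  case (trans a b c)
  from trans.IH show ?case by (rule pres_eq.trans)
next
  case (cancel u' b x v')
  show ?case using pres_eq.cancel[of R "u @ u'" b x "v' @ v"] by simp
next
  case (rel r u' v')
  show ?case using pres_eq.rel[OF rel, of "u @ u'" "v' @ v"] by simp
qed

lemma pres_eq_relator: "r \<in> R \<Longrightarrow> pres_eq R (pos_word r) []"
  using pres_eq.rel[of r R "[]" "[]"] by simp

lemma pres_eq_cancel_inverse: "pres_eq R (u @ x @ inv_word x @ v) (u @ v)"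
proof (induction x arbitrary: v rule: rev_induct)
  case Nil
  then show ?case by (simp add: pres_eq.refl)
next
  case (snoc a x)
  obtain b y where a: "a = (b, y)" by fastforce
  have "pres_eq R (u @ x @ [(b, y), (\<not> b, y)] @ inv_word x @ v) (u @ x @ inv_word x @ v)"
    using pres_eq.cancel[of R "u @ x" b y "inv_word x @ v"] by simp
  then have "pres_eq R (u @ (x @ [a]) @ inv_word (x @ [a]) @ v) (u @ x @ inv_word x @ v)"
    by (simp add: a inv_word_def)
  then show ?case using snoc.IH by (rule pres_eq.trans)
qed

lemma pres_eq_subst_word:
  assumes relators: "\<And>r. r \<in> R \<Longrightarrow> pres_eq R' (subst_word \<sigma> (pos_word r)) []"
    and "pres_eq R u v"
  shows "pres_eq R' (subst_word \<sigma> u) (subst_word \<sigma> v)"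
  using assms(2)
proof (induction rule: pres_eq.induct)
  case (refl w)
  then show ?case by (rule pres_eq.refl)
next
  case (sym a b)
  from sym.IH show ?case by (rule pres_eq.sym)
next
  case (trans a b c)
  from trans.IH show ?case by (rule pres_eq.trans)
next
  case (cancel u b x v)
  show ?case
    using pres_eq_cancel_inverse[of R' "subst_word \<sigma> u" "\<sigma> x" "subst_word \<sigma> v"]
      pres_eq_cancel_inverse[of R' "subst_word \<sigma> u" "inv_word (\<sigma> x)" "subst_word \<sigma> v"]
    by auto
next
  case (rel r u v)
  show ?case
    using pres_eq_append_cong[OF relators[OF rel], of "subst_word \<sigma> u" "subst_word \<sigma> v"]
    by simp
qed

lemma word_length_le:
  assumes "set (map snd w') \<subseteq> Y" and "pres_eq R w w'"
  shows "word_length Y R w \<le> length w'"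
  unfolding word_length_def using assms by (intro Least_le) blast

lemma word_length_geodesic:
  assumes "set (map snd w) \<subseteq> Y"
  obtains w' where "set (map snd w') \<subseteq> Y" and "length w' = word_length Y R w"
    and "pres_eq R w w'"
proof -
  let ?P = "\<lambda>n. \<exists>w'. set (map snd w') \<subseteq> Y \<and> length w' = n \<and> pres_eq R w w'"
  have "?P (length w)" using assms pres_eq.refl by blast
  then have "?P (Least ?P)" by (rule LeastI)
  then show ?thesis using that by (auto simp: word_length_def)
qed

lemma phi_C_eq_subst_word: "phi_C C = subst_word (\<lambda>i. pos_word (A_C C i))"
  by (simp add: phi_C_def subst_word_def fun_eq_iff)

lemma phi_C_pos_word: "phi_C C (pos_word r) = pos_word (rel_C C r)"
  by (induction r) (auto simp: phi_C_eq_subst_word pos_word_def rel_C_def)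

lemma length_phi_C: "length (phi_C C w) = C * length w"
  by (induction w) (auto simp: phi_C_eq_subst_word pos_word_def A_C_def inv_word_def)

lemma set_map_snd_phi_C:
  "set (map snd w) \<subseteq> {..<m} \<Longrightarrow> set (map snd (phi_C C w)) \<subseteq> Y_C C m"
  by (auto simp: phi_C_eq_subst_word snd_set_subst_word pos_word_def A_C_def Y_C_def
      image_image)

lemma pres_eq_phi_C:
  assumes "pres_eq S u v"
  shows "pres_eq (S_C C S) (phi_C C u) (phi_C C v)"
proof -
  have "pres_eq (S_C C S) (phi_C C (pos_word r)) []" if "r \<in> S" for r
    using that by (auto simp: phi_C_pos_word S_C_def intro: pres_eq_relator)
  with assms show ?thesis unfolding phi_C_eq_subst_word by (blast intro: pres_eq_subst_word)
qed

definition layer_proj :: "nat \<Rightarrow> (nat \<times> nat) word \<Rightarrow> nat word" where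
  "layer_proj j = subst_word (\<lambda>(k, i). if k = j then [(True, i)] else [])"

lemma concat_map_upt_if_eq:
  "j < n \<Longrightarrow> concat (map (\<lambda>k. if k = j then xs else []) [0..<n]) = xs"
  by (induction n) (auto simp: less_Suc_eq)

lemma layer_proj_phi_C: "j < C \<Longrightarrow> layer_proj j (phi_C C w) = w"
  by (simp add: layer_proj_def phi_C_eq_subst_word subst_word_subst_word o_def
      subst_word_pos_word A_C_def concat_map_upt_if_eq subst_word_letter)

lemma pres_eq_layer_proj:
  assumes "j < C" and "pres_eq (S_C C S) u v"
  shows "pres_eq S (layer_proj j u) (layer_proj j v)"
proof -
  have "pres_eq S (layer_proj j (pos_word r')) []" if "r' \<in> S_C C S" for r'
    using that assms(1)
    by (auto simp: S_C_def layer_proj_phi_C intro: pres_eq_relator simp flip: phi_C_pos_word)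
  with assms(2) show ?thesis unfolding layer_proj_def by (blast intro: pres_eq_subst_word)
qed

lemma set_map_snd_layer_proj:
  "set (map snd v) \<subseteq> Y_C C m \<Longrightarrow> set (map snd (layer_proj j v)) \<subseteq> {..<m}"
  by (auto simp: layer_proj_def snd_set_subst_word Y_C_def split: if_splits)

lemma sum_length_layer_proj:
  assumes "set (map snd v) \<subseteq> Y_C C m"
  shows "(\<Sum>j<C. length (layer_proj j v)) = length v"
  using assms
proof (induction v)
  case Nil
  then show ?case by (simp add: layer_proj_def)
next
  case (Cons a v)
  obtain b k i where a: "a = (b, (k, i))" by (metis prod.exhaust)
  have k: "k < C" using Cons.prems a by (auto simp: Y_C_def)
  have "(\<Sum>j<C. length (layer_proj j (a # v)))
      = (\<Sum>j<C. (if j = k then 1 else 0) + length (layer_proj j v))"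
    by (rule sum.cong) (auto simp: a layer_proj_def)
  also have "\<dots> = 1 + (\<Sum>j<C. length (layer_proj j v))"
    using k by (simp add: sum.distrib)
  finally show ?case using Cons by simp
qed

lemma word_length_phi_C_le:
  assumes "set (map snd w) \<subseteq> {..<m}"
  shows "word_length (Y_C C m) (S_C C S) (phi_C C w) \<le> C * word_length {..<m} S w"
proof -
  obtain w' where w': "set (map snd w') \<subseteq> {..<m}" "length w' = word_length {..<m} S w"
    "pres_eq S w w'"
    using word_length_geodesic[OF assms] .
  have "word_length (Y_C C m) (S_C C S) (phi_C C w) \<le> length (phi_C C w')"
    using set_map_snd_phi_C[OF w'(1)] pres_eq_phi_C[OF w'(3)] by (rule word_length_le)
  then show ?thesis using w'(2) by (simp add: length_phi_C)
qed

lemma word_length_phi_C_ge: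
  assumes "set (map snd w) \<subseteq> {..<m}"
  shows "C * word_length {..<m} S w \<le> word_length (Y_C C m) (S_C C S) (phi_C C w)"
proof -
  obtain v where v: "set (map snd v) \<subseteq> Y_C C m"
    "length v = word_length (Y_C C m) (S_C C S) (phi_C C w)"
    "pres_eq (S_C C S) (phi_C C w) v"
    using word_length_geodesic[OF set_map_snd_phi_C[OF assms]] .
  have "word_length {..<m} S w \<le> length (layer_proj j v)" if "j < C" for j
  proof -
    have "pres_eq S w (layer_proj j v)"
      using pres_eq_layer_proj[OF that v(3)] by (simp add: layer_proj_phi_C[OF that])
    with set_map_snd_layer_proj[OF v(1)] show ?thesis by (rule word_length_le)
  qed
  then have "C * word_length {..<m} S w \<le> (\<Sum>j<C. length (layer_proj j v))"
    using sum_mono[of "{..<C}" "\<lambda>_. word_length {..<m} S w"] by simp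
  then show ?thesis using sum_length_layer_proj[OF v(1)] v(2) by simp
qed

theorem lemma3p4:
  fixes m C :: nat and S :: "nat list set" and w :: "nat word"
  assumes "C \<ge> 1"
    and "\<forall>r\<in>S. set r \<subseteq> {..<m}"
    and "[] \<notin> S"
    and "set (map snd w) \<subseteq> {..<m}"
  shows "word_length (Y_C C m) (S_C C S) (phi_C C w) = C * word_length {..<m} S w"
  using word_length_phi_C_le[OF assms(4)] word_length_phi_C_ge[OF assms(4)] by (rule antisym)

end
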